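(* Let $N\ge 1$, let $f:Z[1,N]\times\mathbb{R}\to\mathbb{R}$ be continuous in its second variable for every $k\in Z[1,N]$, and let $p:Z[1,N+2]\to\mathbb{R}$, $q:Z[1,N+1]\to\mathbb{R}$. Assume $\dim E>1$, $p_{\max}>0$, and (1) $\min_{k\in Z[1,N]}\lim_{s\to+\infty}\frac{f(k,s)}{s}>\alpha_1$; (2) there exists $S>0$ such that $f(k,-s)\le -f(k,s)$ for all $s\ge S$ and $k\in Z[1,N]$; (3) $\max_{k\in Z[1,N]}\lim_{s\to0}\frac{f(k,s)}{s}<\alpha_2$ (all limits assumed to exist, those at $+\infty$ possibly equal to $+\infty$). Then the boundary value problem $$\Delta^2\big(p(k)\Delta^2 y(k-2)\big)+\Delta\big(q(k)\Delta y(k-1)\big)+f(k,y(k))=0\ \ (k\in Z[1,N]),\qquad y(-1)=y(0)=y(N+1)=y(N+2)=0$$ has at least two solutions.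
   Context: $Z[a,b]=[a,b]\cap\mathbb{Z}$; $\Delta x(k)=x(k+1)-x(k)$, $\Delta^2=\Delta\circ\Delta$; $\Delta^2(p(k)\Delta^2y(k-2))$ means $\Delta^2$ applied to $k\mapsto p(k)\Delta^2 y(k-2)$, similarly for $\Delta(q(k)\Delta y(k-1))$. A solution is a function $y:Z[-1,N+2]\to\mathbb{R}$ satisfying the equation and boundary conditions. $E=\{y:Z[-1,N+2]\to\mathbb{R}\mid y(-1)=y(0)=y(N+1)=y(N+2)=0\}$ (a real vector space of dimension $N$). $p_{\min},p_{\max}$ are the min and max of $p$ over $Z[1,N+2]$, $q_{\min},q_{\max}$ those of $q$ over $Z[1,N+1]$. With $\tilde y=(y(1),\dots,y(N))^T$, $V$ is the $(N+1)\times N$ matrix with $V\tilde y=(\Delta y(0),\dots,\Delta y(N))^T$ and $W$ the $(N+2)\times N$ matrix with $W\tilde y=(\Delta^2y(-1),\dots,\Delta^2y(N))^T$ for $y\in E$; $\lambda_1,\lambda_2$ are the smallest eigenvalues of $V^TV$, $W^TW$. $\eta'(p)=\lambda_2$ if $p_{\min}\ge0$, $16$ if $p_{\min}<0$; $\eta(q)=\lambda_1$ if $q_{\max}<0$, $4$ if $q_{\max}\ge0$; $\xi(q)=\lambda_1$ if $q_{\min}\ge0$, $4$ if $q_{\min}<0$. $\alpha_1=\eta(q)q_{\max}-\eta'(p)p_{\min}$ and $\alpha_2=\xi(q)q_{\min}-16p_{\max}$. *)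

theory Defs
  imports Complex_Main "HOL-Library.Extended_Real" "Jordan_Normal_Form.Char_Poly"
begin

definition fdiff :: "(int \<Rightarrow> real) \<Rightarrow> int \<Rightarrow> real" where
  "fdiff x k = x (k + 1) - x k"

definition fdiff2 :: "(int \<Rightarrow> real) \<Rightarrow> int \<Rightarrow> real" where
  "fdiff2 x = fdiff (fdiff x)"

text \<open>The j-th coordinate vector of E (j = 0..N-1), i.e. the function with value 1 at
  the point j+1 and 0 elsewhere.\<close>
definition unitfun :: "nat \<Rightarrow> int \<Rightarrow> real" where
  "unitfun j = (\<lambda>k. if k = int j + 1 then 1 else 0)"

text \<open>V: (N+1) x N matrix with V ytilde = (Delta y(0),...,Delta y(N)).\<close>
definition Vmat :: "nat \<Rightarrow> real mat" where
  "Vmat N = mat (N + 1) N (\<lambda>(i, j). fdiff (unitfun j) (int i))"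

text \<open>W: (N+2) x N matrix with W ytilde = (Delta^2 y(-1),...,Delta^2 y(N)).\<close>
definition Wmat :: "nat \<Rightarrow> real mat" where
  "Wmat N = mat (N + 2) N (\<lambda>(i, j). fdiff2 (unitfun j) (int i - 1))"

definition smallest_eigenvalue :: "real mat \<Rightarrow> real" where
  "smallest_eigenvalue A = Min {l. eigenvalue A l}"

definition lambda1 :: "nat \<Rightarrow> real" where
  "lambda1 N = smallest_eigenvalue (transpose_mat (Vmat N) * Vmat N)"

definition lambda2 :: "nat \<Rightarrow> real" where
  "lambda2 N = smallest_eigenvalue (transpose_mat (Wmat N) * Wmat N)"

definition pmin :: "nat \<Rightarrow> (int \<Rightarrow> real) \<Rightarrow> real" where
  "pmin N p = Min (p ` {1 .. int N + 2})"
definition pmax :: "nat \<Rightarrow> (int \<Rightarrow> real) \<Rightarrow> real" where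
  "pmax N p = Max (p ` {1 .. int N + 2})"
definition qmin :: "nat \<Rightarrow> (int \<Rightarrow> real) \<Rightarrow> real" where
  "qmin N q = Min (q ` {1 .. int N + 1})"
definition qmax :: "nat \<Rightarrow> (int \<Rightarrow> real) \<Rightarrow> real" where
  "qmax N q = Max (q ` {1 .. int N + 1})"

definition eta' :: "nat \<Rightarrow> (int \<Rightarrow> real) \<Rightarrow> real" where
  "eta' N p = (if pmin N p \<ge> 0 then lambda2 N else 16)"
definition eta :: "nat \<Rightarrow> (int \<Rightarrow> real) \<Rightarrow> real" where
  "eta N q = (if qmax N q < 0 then lambda1 N else 4)"
definition xi :: "nat \<Rightarrow> (int \<Rightarrow> real) \<Rightarrow> real" where
  "xi N q = (if qmin N q \<ge> 0 then lambda1 N else 4)"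

definition alpha1 :: "nat \<Rightarrow> (int \<Rightarrow> real) \<Rightarrow> (int \<Rightarrow> real) \<Rightarrow> real" where
  "alpha1 N p q = eta N q * qmax N q - eta' N p * pmin N p"
definition alpha2 :: "nat \<Rightarrow> (int \<Rightarrow> real) \<Rightarrow> (int \<Rightarrow> real) \<Rightarrow> real" where
  "alpha2 N p q = xi N q * qmin N q - 16 * pmax N p"

definition is_solution ::
  "nat \<Rightarrow> (int \<Rightarrow> real) \<Rightarrow> (int \<Rightarrow> real) \<Rightarrow> (int \<Rightarrow> real \<Rightarrow> real) \<Rightarrow> (int \<Rightarrow> real) \<Rightarrow> bool" where
  "is_solution N p q f y \<longleftrightarrow>
     (\<forall>k\<in>{1 .. int N}.
        fdiff2 (\<lambda>j. p j * fdiff2 y (j - 2)) k + fdiff (\<lambda>j. q j * fdiff y (j - 1)) k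
        + f k (y k) = 0)
     \<and> y (-1) = 0 \<and> y 0 = 0 \<and> y (int N + 1) = 0 \<and> y (int N + 2) = 0"

end

theory Submission
  imports Defs "HOL-Analysis.Analysis"
begin

text \<open>Solutions are the critical points on E of the energy
  \<open>J(y) = \<Sum> p(k) (\<Delta>\<^sup>2y(k-2))\<^sup>2/2 - \<Sum> q(k) (\<Delta>y(k-1))\<^sup>2/2 + \<Sum> F(k, y(k))\<close>,
  where \<open>F(k, \<cdot>)\<close> is an antiderivative of \<open>f(k, \<cdot>)\<close>. The Rayleigh bounds
  \<open>\<lambda>\<^sub>2|y|\<^sup>2 \<le> |Wy\<^sup>~|\<^sup>2 \<le> 16|y|\<^sup>2\<close> and \<open>\<lambda>\<^sub>1|y|\<^sup>2 \<le> |Vy\<^sup>~|\<^sup>2 \<le> 4|y|\<^sup>2\<close> together with (1) and (2)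
  make J coercive, so it attains a global minimum on the finite-dimensional space E.
  By (3), J is negative on small multiples of a coordinate vector, so the minimiser is not 0;
  and (3) also forces \<open>f(k, 0) = 0\<close>, so that 0 is a second solution.\<close>

text \<open>Jordan_Normal_Form's scalar product and the inner product of HOL-Analysis share the
  symbol \<open>\<bullet>\<close>; only the former is used here.\<close>

unbundle no inner_syntax

section \<open>The smallest eigenvalue of a Gram matrix\<close>

lemma linear_coeff_eq_0_if_quadratic_nonneg:
  fixes a b :: real
  assumes "\<And>t. 0 \<le> a * t + b * t\<^sup>2"
  shows "a = 0"
proof -
  have "((\<lambda>t. a * t + b * t\<^sup>2) has_real_derivative a) (at 0)"
    by (auto intro!: derivative_eq_intros)
  then show ?thesis
    by (rule DERIV_local_min[where d = 1]) (simp_all add: assms)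
qed

lemma scalar_prod_add_smult_self:
  fixes a b :: "real Matrix.vec"
  assumes "a \<in> carrier_vec n" "b \<in> carrier_vec n"
  shows "(a + t \<cdot>\<^sub>v b) \<bullet> (a + t \<cdot>\<^sub>v b) = a \<bullet> a + 2 * t * (a \<bullet> b) + t\<^sup>2 * (b \<bullet> b)"
  using assms
  by (simp add: add_scalar_prod_distrib[of _ n] scalar_prod_add_distrib[of _ n]
      comm_scalar_prod[of b n a] power2_eq_square algebra_simps)

lemma scalar_prod_self_nonneg: "0 \<le> (v :: real Matrix.vec) \<bullet> v"
  by (auto simp: scalar_prod_def intro!: sum_nonneg)

lemma continuous_on_coordinate [continuous_intros]: "continuous_on S (\<lambda>x :: 'a \<Rightarrow> real. x i)"
  by (rule continuous_on_subset[OF continuous_on_product_coordinates]) simp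

lemma compact_supported_box:
  assumes "0 \<le> R"
  shows "compact {x :: 'a \<Rightarrow> real. (\<forall>i. i \<notin> I \<longrightarrow> x i = 0) \<and> (\<forall>i. \<bar>x i\<bar> \<le> R)}"
proof -
  have pointwise: "(i \<notin> I \<longrightarrow> t = 0) \<and> \<bar>t\<bar> \<le> R \<longleftrightarrow> t \<in> (if i \<in> I then {-R..R} else {0})"
    for i and t :: real
    using assms by (auto simp: abs_le_iff)
  have "{x :: 'a \<Rightarrow> real. (\<forall>i. i \<notin> I \<longrightarrow> x i = 0) \<and> (\<forall>i. \<bar>x i\<bar> \<le> R)}
      = {x. \<forall>i. x i \<in> (if i \<in> I then {-R..R} else {0})}"
    using pointwise by blast
  also have "\<dots> = PiE UNIV (\<lambda>i. if i \<in> I then {-R..R} else {0})"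
    by (simp add: PiE_UNIV_domain Pi_def)
  finally have "{x :: 'a \<Rightarrow> real. (\<forall>i. i \<notin> I \<longrightarrow> x i = 0) \<and> (\<forall>i. \<bar>x i\<bar> \<le> R)}
      = PiE UNIV (\<lambda>i. if i \<in> I then {-R..R} else {0})" .
  moreover have "compactin (product_topology (\<lambda>i. euclidean) UNIV)
      (PiE UNIV (\<lambda>i. if i \<in> I then {-R..R} else {0::real}))"
    by (subst compactin_PiE) auto
  ultimately show ?thesis
    by (simp add: euclidean_product_topology)
qed

lemma gram_form_attains_min_on_unit_sphere:
  fixes A :: "real mat"
  assumes A: "A \<in> carrier_mat m n" and "0 < n"
  obtains u where "u \<in> carrier_vec n" "u \<bullet> u = 1"
    "\<And>v. v \<in> carrier_vec n \<Longrightarrow> v \<bullet> v = 1 \<Longrightarrow> (A *\<^sub>v u) \<bullet> (A *\<^sub>v u) \<le> (A *\<^sub>v v) \<bullet> (A *\<^sub>v v)"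
proof -
  \<comment> \<open>the bound \<open>\<bar>x i\<bar> \<le> 1\<close> follows from the sum condition but makes compactness evident\<close>
  define S where "S = {x :: nat \<Rightarrow> real. (\<forall>i. i \<notin> {..<n} \<longrightarrow> x i = 0) \<and> (\<forall>i. \<bar>x i\<bar> \<le> 1)}
    \<inter> {x. (\<Sum>i<n. (x i)\<^sup>2) = 1}"
  define Q where "Q x = (A *\<^sub>v Matrix.vec n x) \<bullet> (A *\<^sub>v Matrix.vec n x)" for x
  have Q_eq: "Q = (\<lambda>x. \<Sum>i<m. (\<Sum>j<n. A $$ (i, j) * x j)\<^sup>2)"
    using A by (auto simp: Q_def scalar_prod_def lessThan_atLeast0 power2_eq_square intro!: sum.cong)
  have "compact S"
    unfolding S_def
    by (intro compact_Int_closed compact_supported_box closed_Collect_eq continuous_intros) auto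
  moreover have "(\<lambda>i. if i = 0 then 1 else 0) \<in> S"
    using \<open>0 < n\<close> by (simp add: S_def if_distrib[of power2] cong: if_cong)
  moreover have "continuous_on S Q"
    unfolding Q_eq by (intro continuous_intros)
  ultimately obtain x0 where x0: "x0 \<in> S" and min: "\<And>x. x \<in> S \<Longrightarrow> Q x0 \<le> Q x"
    using continuous_attains_inf by (metis empty_iff)
  show ?thesis
  proof
    show "Matrix.vec n x0 \<in> carrier_vec n" by simp
    show "Matrix.vec n x0 \<bullet> Matrix.vec n x0 = 1"
      using x0 by (simp add: S_def scalar_prod_def lessThan_atLeast0 power2_eq_square)
    fix v :: "real Matrix.vec"
    assume v: "v \<in> carrier_vec n" "v \<bullet> v = 1"
    define x where "x i = (if i < n then v $ i else 0)" for i
    have "Matrix.vec n x = v"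
      using v by (auto simp: x_def)
    moreover have "\<bar>v $ i\<bar> \<le> 1" if "i < n" for i
    proof -
      have "(v $ i)\<^sup>2 \<le> (\<Sum>j<n. (v $ j)\<^sup>2)"
        using that by (intro member_le_sum) auto
      also have "\<dots> = v \<bullet> v"
        using v by (simp add: scalar_prod_def lessThan_atLeast0 power2_eq_square)
      finally show ?thesis
        using v by (simp add: abs_square_le_1)
    qed
    then have "x \<in> S"
      using v by (auto simp: S_def x_def scalar_prod_def lessThan_atLeast0 power2_eq_square)
    ultimately show "(A *\<^sub>v Matrix.vec n x0) \<bullet> (A *\<^sub>v Matrix.vec n x0) \<le> (A *\<^sub>v v) \<bullet> (A *\<^sub>v v)"
      using min unfolding Q_def by metis
  qed
qed

lemma gram_form_ge_min_on_unit_sphere: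
  fixes A :: "real mat"
  assumes A: "A \<in> carrier_mat m n" and v: "v \<in> carrier_vec n"
    and min: "\<And>w. w \<in> carrier_vec n \<Longrightarrow> w \<bullet> w = 1 \<Longrightarrow> \<mu> \<le> (A *\<^sub>v w) \<bullet> (A *\<^sub>v w)"
  shows "\<mu> * (v \<bullet> v) \<le> (A *\<^sub>v v) \<bullet> (A *\<^sub>v v)"
proof (cases "v \<bullet> v = 0")
  case True
  then show ?thesis
    by (simp add: scalar_prod_self_nonneg)
next
  case False
  then have pos: "0 < v \<bullet> v"
    using scalar_prod_self_nonneg[of v] by linarith
  define c where "c = 1 / sqrt (v \<bullet> v)"
  have c2: "c\<^sup>2 * (v \<bullet> v) = 1"
    using pos by (simp add: c_def power_divide)
  have "\<mu> \<le> (A *\<^sub>v (c \<cdot>\<^sub>v v)) \<bullet> (A *\<^sub>v (c \<cdot>\<^sub>v v))"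
    using v c2 by (intro min) (auto simp: power2_eq_square)
  also have "\<dots> = c\<^sup>2 * ((A *\<^sub>v v) \<bullet> (A *\<^sub>v v))"
    using A v by (simp add: mult_mat_vec[OF A v] power2_eq_square)
  finally have "\<mu> * (v \<bullet> v) \<le> c\<^sup>2 * (v \<bullet> v) * ((A *\<^sub>v v) \<bullet> (A *\<^sub>v v))"
    using pos by (simp add: mult.commute mult.left_commute)
  then show ?thesis
    using c2 by simp
qed

lemma gram_form_minimizer_is_eigenvector:
  fixes A :: "real mat"
  assumes A: "A \<in> carrier_mat m n" and u: "u \<in> carrier_vec n"
    and min: "\<And>v. v \<in> carrier_vec n \<Longrightarrow> \<mu> * (v \<bullet> v) \<le> (A *\<^sub>v v) \<bullet> (A *\<^sub>v v)"
    and attained: "(A *\<^sub>v u) \<bullet> (A *\<^sub>v u) = \<mu> * (u \<bullet> u)"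
  shows "(transpose_mat A * A) *\<^sub>v u = \<mu> \<cdot>\<^sub>v u"
proof -
  have first_variation: "(A *\<^sub>v u) \<bullet> (A *\<^sub>v w) = \<mu> * (u \<bullet> w)" if w: "w \<in> carrier_vec n" for w
  proof -
    have "0 \<le> (2 * ((A *\<^sub>v u) \<bullet> (A *\<^sub>v w) - \<mu> * (u \<bullet> w))) * t
        + ((A *\<^sub>v w) \<bullet> (A *\<^sub>v w) - \<mu> * (w \<bullet> w)) * t\<^sup>2" for t
    proof -
      have "A *\<^sub>v (u + t \<cdot>\<^sub>v w) = A *\<^sub>v u + t \<cdot>\<^sub>v (A *\<^sub>v w)"
        using A u w by (simp add: mult_add_distrib_mat_vec[of A m n] mult_mat_vec[OF A w])
      moreover have "\<mu> * ((u + t \<cdot>\<^sub>v w) \<bullet> (u + t \<cdot>\<^sub>v w))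
          \<le> (A *\<^sub>v (u + t \<cdot>\<^sub>v w)) \<bullet> (A *\<^sub>v (u + t \<cdot>\<^sub>v w))"
        using u w by (intro min) simp
      ultimately show ?thesis
        using A u w attained
        by (simp add: scalar_prod_add_smult_self[of _ n] scalar_prod_add_smult_self[of _ m]
            algebra_simps)
    qed
    then show ?thesis
      using linear_coeff_eq_0_if_quadratic_nonneg by fastforce
  qed
  show ?thesis
  proof (rule eq_vecI)
    fix j
    assume "j < dim_vec (\<mu> \<cdot>\<^sub>v u)"
    then have j: "j < n"
      using u by simp
    have "((transpose_mat A * A) *\<^sub>v u) $ j = (transpose_mat A *\<^sub>v (A *\<^sub>v u)) \<bullet> unit_vec n j"
      using A u j by simp
    also have "\<dots> = (A *\<^sub>v u) \<bullet> (A *\<^sub>v unit_vec n j)"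
      using A u by (intro transpose_vec_mult_scalar) auto
    also have "\<dots> = \<mu> * u $ j"
      using first_variation[of "unit_vec n j"] j by simp
    finally show "((transpose_mat A * A) *\<^sub>v u) $ j = (\<mu> \<cdot>\<^sub>v u) $ j"
      using j u by simp
  qed (use A u in simp)
qed

lemma smallest_eigenvalue_le:
  fixes M :: "real mat"
  assumes M: "M \<in> carrier_mat n n" and "eigenvalue M l"
  shows "smallest_eigenvalue M \<le> l"
proof -
  have "char_poly M \<noteq> 0"
    using degree_monic_char_poly[OF M] by auto
  then have "finite {l. poly (char_poly M) l = 0}"
    by (rule poly_roots_finite)
  then have "finite {l. eigenvalue M l}"
    using eigenvalue_root_char_poly[OF M] by simp
  then show ?thesis
    unfolding smallest_eigenvalue_def using assms(2) by (intro Min_le) auto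
qed

lemma smallest_eigenvalue_gram_le:
  fixes A :: "real mat"
  assumes A: "A \<in> carrier_mat m n" and "0 < n" and v: "v \<in> carrier_vec n"
  shows "smallest_eigenvalue (transpose_mat A * A) * (v \<bullet> v) \<le> (A *\<^sub>v v) \<bullet> (A *\<^sub>v v)"
proof -
  obtain u where u: "u \<in> carrier_vec n" "u \<bullet> u = 1"
    and min: "\<And>w. w \<in> carrier_vec n \<Longrightarrow> w \<bullet> w = 1 \<Longrightarrow> (A *\<^sub>v u) \<bullet> (A *\<^sub>v u) \<le> (A *\<^sub>v w) \<bullet> (A *\<^sub>v w)"
    using gram_form_attains_min_on_unit_sphere[OF A \<open>0 < n\<close>] by blast
  define \<mu> where "\<mu> = (A *\<^sub>v u) \<bullet> (A *\<^sub>v u)"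
  have bound: "\<mu> * (w \<bullet> w) \<le> (A *\<^sub>v w) \<bullet> (A *\<^sub>v w)" if "w \<in> carrier_vec n" for w
    using gram_form_ge_min_on_unit_sphere[OF A that] min unfolding \<mu>_def by blast
  have "(transpose_mat A * A) *\<^sub>v u = \<mu> \<cdot>\<^sub>v u"
    using u by (intro gram_form_minimizer_is_eigenvector[OF A u(1) bound]) (simp_all add: \<mu>_def)
  moreover have "u \<noteq> 0\<^sub>v n"
    using u by auto
  ultimately have "eigenvalue (transpose_mat A * A) \<mu>"
    using A u unfolding eigenvalue_def eigenvector_def by auto
  then have "smallest_eigenvalue (transpose_mat A * A) \<le> \<mu>"
    using A by (intro smallest_eigenvalue_le[of _ n]) auto
  then show ?thesis
    using bound[OF v] scalar_prod_self_nonneg[of v] by (meson mult_right_mono order_trans)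
qed

section \<open>The space E\<close>

definition in_E :: "nat \<Rightarrow> (int \<Rightarrow> real) \<Rightarrow> bool" where
  "in_E N y \<longleftrightarrow> (\<forall>k. k \<notin> {1..int N} \<longrightarrow> y k = 0)"

definition sqnorm :: "nat \<Rightarrow> (int \<Rightarrow> real) \<Rightarrow> real" where
  "sqnorm N y = (\<Sum>k\<in>{1..int N}. (y k)\<^sup>2)"

definition coords :: "nat \<Rightarrow> (int \<Rightarrow> real) \<Rightarrow> real Matrix.vec" where
  "coords N y = Matrix.vec N (\<lambda>j. y (int j + 1))"

lemma coords_carrier [simp]: "coords N y \<in> carrier_vec N"
  by (simp add: coords_def)

lemma Vmat_carrier: "Vmat N \<in> carrier_mat (N + 1) N"
  by (simp add: Vmat_def)

lemma Wmat_carrier: "Wmat N \<in> carrier_mat (N + 2) N"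
  by (simp add: Wmat_def)

lemma sum_lessThan_shift_int: "(\<Sum>i<m. g (int i + c)) = (\<Sum>k\<in>{c..<c + int m}. g k)"
  by (rule sum.reindex_bij_witness[of _ "\<lambda>k. nat (k - c)" "\<lambda>i. int i + c"]) auto

lemma sum_sq_shift_eq_sqnorm:
  assumes "in_E N y" "c \<le> 1" "int N + 1 \<le> int m + c"
  shows "(\<Sum>i<m. (y (int i + c))\<^sup>2) = sqnorm N y"
proof -
  have "(\<Sum>i<m. (y (int i + c))\<^sup>2) = (\<Sum>k\<in>{c..<c + int m}. (y k)\<^sup>2)"
    by (rule sum_lessThan_shift_int)
  also have "\<dots> = sqnorm N y"
    unfolding sqnorm_def by (rule sum.mono_neutral_right) (use assms in \<open>auto simp: in_E_def\<close>)
  finally show ?thesis .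
qed

lemma scalar_prod_coords: "coords N y \<bullet> coords N y = sqnorm N y"
proof -
  have "coords N y \<bullet> coords N y = (\<Sum>i<N. (y (int i + 1))\<^sup>2)"
    by (simp add: coords_def scalar_prod_def lessThan_atLeast0 power2_eq_square)
  also have "\<dots> = (\<Sum>k\<in>{1..<1 + int N}. (y k)\<^sup>2)"
    by (rule sum_lessThan_shift_int)
  also have "\<dots> = sqnorm N y"
    unfolding sqnorm_def by (rule sum.cong) auto
  finally show ?thesis .
qed

lemma in_E_expansion:
  assumes "in_E N y"
  shows "y = (\<lambda>k. \<Sum>j<N. y (int j + 1) * unitfun j k)"
proof
  fix k
  show "y k = (\<Sum>j<N. y (int j + 1) * unitfun j k)"
  proof (cases "k \<in> {1..int N}")
    case True
    have "(\<Sum>j<N. y (int j + 1) * unitfun j k) = (\<Sum>j<N. if j = nat (k - 1) then y k else 0)"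
      using True by (intro sum.cong) (auto simp: unitfun_def)
    moreover have "nat (k - 1) < N"
      using True by auto
    ultimately show ?thesis
      by simp
  next
    case False
    then have "unitfun j k = 0" if "j < N" for j
      using that by (auto simp: unitfun_def)
    then show ?thesis
      using False assms by (simp add: in_E_def)
  qed
qed

lemma fdiff_linear_combination:
  "fdiff (\<lambda>k. \<Sum>j\<in>J. c j * g j k) = (\<lambda>k. \<Sum>j\<in>J. c j * fdiff (g j) k)"
  by (rule ext) (simp add: fdiff_def sum_subtractf right_diff_distrib)

lemma fdiff2_linear_combination:
  "fdiff2 (\<lambda>k. \<Sum>j\<in>J. c j * g j k) = (\<lambda>k. \<Sum>j\<in>J. c j * fdiff2 (g j) k)"
  by (simp add: fdiff2_def fdiff_linear_combination)

lemma mult_Vmat_coords: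
  assumes "in_E N y" "i < N + 1"
  shows "(Vmat N *\<^sub>v coords N y) $ i = fdiff y (int i)"
proof -
  have "(Vmat N *\<^sub>v coords N y) $ i = (\<Sum>j<N. y (int j + 1) * fdiff (unitfun j) (int i))"
    using assms(2) by (simp add: Vmat_def coords_def scalar_prod_def lessThan_atLeast0 mult.commute)
  also have "\<dots> = fdiff (\<lambda>k. \<Sum>j<N. y (int j + 1) * unitfun j k) (int i)"
    by (simp add: fdiff_linear_combination)
  finally show ?thesis
    using in_E_expansion[OF assms(1)] by simp
qed

lemma mult_Wmat_coords:
  assumes "in_E N y" "i < N + 2"
  shows "(Wmat N *\<^sub>v coords N y) $ i = fdiff2 y (int i - 1)"
proof -
  have "(Wmat N *\<^sub>v coords N y) $ i = (\<Sum>j<N. y (int j + 1) * fdiff2 (unitfun j) (int i - 1))"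
    using assms(2) by (simp add: Wmat_def coords_def scalar_prod_def lessThan_atLeast0 mult.commute)
  also have "\<dots> = fdiff2 (\<lambda>k. \<Sum>j<N. y (int j + 1) * unitfun j k) (int i - 1)"
    by (simp add: fdiff2_linear_combination)
  finally show ?thesis
    using in_E_expansion[OF assms(1)] by simp
qed

lemma lambda1_le_sum_sq_fdiff:
  assumes "0 < N" "in_E N y"
  shows "lambda1 N * sqnorm N y \<le> (\<Sum>i<N + 1. (fdiff y (int i))\<^sup>2)"
proof -
  have "(Vmat N *\<^sub>v coords N y) \<bullet> (Vmat N *\<^sub>v coords N y) = (\<Sum>i<N + 1. (fdiff y (int i))\<^sup>2)"
    using mult_Vmat_coords[OF assms(2)] Vmat_carrier[of N]
    by (simp add: scalar_prod_def lessThan_atLeast0 power2_eq_square)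
  then show ?thesis
    using smallest_eigenvalue_gram_le[OF Vmat_carrier assms(1) coords_carrier, of y]
    by (simp add: lambda1_def scalar_prod_coords)
qed

lemma lambda2_le_sum_sq_fdiff2:
  assumes "0 < N" "in_E N y"
  shows "lambda2 N * sqnorm N y \<le> (\<Sum>i<N + 2. (fdiff2 y (int i - 1))\<^sup>2)"
proof -
  have "(Wmat N *\<^sub>v coords N y) \<bullet> (Wmat N *\<^sub>v coords N y) = (\<Sum>i<N + 2. (fdiff2 y (int i - 1))\<^sup>2)"
    using mult_Wmat_coords[OF assms(2)] Wmat_carrier[of N]
    by (simp add: scalar_prod_def lessThan_atLeast0 power2_eq_square)
  then show ?thesis
    using smallest_eigenvalue_gram_le[OF Wmat_carrier assms(1) coords_carrier, of y]
    by (simp add: lambda2_def scalar_prod_coords)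
qed

lemma sum_sq_fdiff_le:
  assumes "in_E N y"
  shows "(\<Sum>i<N + 1. (fdiff y (int i))\<^sup>2) \<le> 4 * sqnorm N y"
proof -
  have "(a - b)\<^sup>2 \<le> 2 * a\<^sup>2 + 2 * b\<^sup>2" for a b :: real
    using zero_le_power2[of "a + b"] by (simp add: power2_eq_square algebra_simps)
  moreover have "fdiff y (int i) = y (int i + 1) - y (int i + 0)" for i
    by (simp add: fdiff_def)
  ultimately have "(\<Sum>i<N + 1. (fdiff y (int i))\<^sup>2)
      \<le> (\<Sum>i<N + 1. 2 * (y (int i + 1))\<^sup>2 + 2 * (y (int i + 0))\<^sup>2)"
    by (intro sum_mono) presburger
  also have "\<dots> = 4 * sqnorm N y"
    using sum_sq_shift_eq_sqnorm[OF assms, of 1 "N + 1"] sum_sq_shift_eq_sqnorm[OF assms, of 0 "N + 1"]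
    by (simp add: sum.distrib sum_distrib_left[symmetric])
  finally show ?thesis .
qed

lemma sum_sq_fdiff2_le:
  assumes "in_E N y"
  shows "(\<Sum>i<N + 2. (fdiff2 y (int i - 1))\<^sup>2) \<le> 16 * sqnorm N y"
proof -
  have "(a - 2 * b + c)\<^sup>2 \<le> 4 * a\<^sup>2 + 8 * b\<^sup>2 + 4 * c\<^sup>2" for a b c :: real
    using zero_le_power2[of "a + b"] zero_le_power2[of "b + c"] zero_le_power2[of "a - c"]
    by (simp add: power2_eq_square algebra_simps)
  \<comment> \<open>the shifts are spelled \<open>int i + c\<close> to match \<open>sum_sq_shift_eq_sqnorm\<close>\<close>
  moreover have "fdiff2 y (int i - 1) = y (int i + 1) - 2 * y (int i + 0) + y (int i + -1)" for i
    by (simp add: fdiff2_def fdiff_def algebra_simps)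
  ultimately have "(\<Sum>i<N + 2. (fdiff2 y (int i - 1))\<^sup>2)
      \<le> (\<Sum>i<N + 2. 4 * (y (int i + 1))\<^sup>2 + 8 * (y (int i + 0))\<^sup>2 + 4 * (y (int i + -1))\<^sup>2)"
    by (intro sum_mono) presburger
  also have "\<dots> = 16 * sqnorm N y"
    using sum_sq_shift_eq_sqnorm[OF assms, of 1 "N + 2"] sum_sq_shift_eq_sqnorm[OF assms, of 0 "N + 2"]
      sum_sq_shift_eq_sqnorm[OF assms, of "-1" "N + 2"]
    by (simp add: sum.distrib sum_distrib_left[symmetric])
  finally show ?thesis .
qed

section \<open>The energy functional\<close>

text \<open>The case distinctions in \<open>\<eta>'\<close>, \<open>\<eta>\<close> and \<open>\<xi>\<close> are those on the sign of the weight bound here.\<close>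

lemma sum_weighted_squares_ge:
  fixes w x :: "'a \<Rightarrow> real"
  assumes "\<And>i. i \<in> I \<Longrightarrow> m \<le> w i"
    and lower: "l * r \<le> (\<Sum>i\<in>I. (x i)\<^sup>2)" and upper: "(\<Sum>i\<in>I. (x i)\<^sup>2) \<le> u * r"
  shows "(if 0 \<le> m then l else u) * m * r \<le> (\<Sum>i\<in>I. w i * (x i)\<^sup>2)"
proof -
  have "m * (\<Sum>i\<in>I. (x i)\<^sup>2) \<le> (\<Sum>i\<in>I. w i * (x i)\<^sup>2)"
    unfolding sum_distrib_left using assms(1) by (intro sum_mono mult_right_mono) auto
  moreover have "(if 0 \<le> m then l else u) * m * r \<le> m * (\<Sum>i\<in>I. (x i)\<^sup>2)"
    using mult_left_mono[OF lower, of m] mult_left_mono_neg[OF upper, of m] by (simp add: mult_ac)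
  ultimately show ?thesis
    by linarith
qed

lemma sum_weighted_squares_le:
  fixes w x :: "'a \<Rightarrow> real"
  assumes "\<And>i. i \<in> I \<Longrightarrow> w i \<le> M"
    and lower: "l * r \<le> (\<Sum>i\<in>I. (x i)\<^sup>2)" and upper: "(\<Sum>i\<in>I. (x i)\<^sup>2) \<le> u * r"
  shows "(\<Sum>i\<in>I. w i * (x i)\<^sup>2) \<le> (if M < 0 then l else u) * M * r"
proof -
  have "(\<Sum>i\<in>I. w i * (x i)\<^sup>2) \<le> M * (\<Sum>i\<in>I. (x i)\<^sup>2)"
    unfolding sum_distrib_left using assms(1) by (intro sum_mono mult_right_mono) auto
  moreover have "M * (\<Sum>i\<in>I. (x i)\<^sup>2) \<le> (if M < 0 then l else u) * M * r"
    using mult_left_mono_neg[OF lower, of M] mult_left_mono[OF upper, of M] by (simp add: mult_ac)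
  ultimately show ?thesis
    by linarith
qed

lemma pmin_le: "i < N + 2 \<Longrightarrow> pmin N p \<le> p (int i + 1)"
  by (auto simp: pmin_def intro!: Min_le imageI)

lemma pmax_ge: "i < N + 2 \<Longrightarrow> p (int i + 1) \<le> pmax N p"
  by (auto simp: pmax_def intro!: Max_ge imageI)

lemma qmin_le: "i < N + 1 \<Longrightarrow> qmin N q \<le> q (int i + 1)"
  by (auto simp: qmin_def intro!: Min_le imageI)

lemma qmax_ge: "i < N + 1 \<Longrightarrow> q (int i + 1) \<le> qmax N q"
  by (auto simp: qmax_def intro!: Max_ge imageI)

text \<open>The functional J of the paper, with \<open>F k\<close> in the role of an antiderivative of \<open>f k\<close>;
  its first two sums are indexed by \<open>i = k - 1\<close>.\<close>

definition energy ::
  "nat \<Rightarrow> (int \<Rightarrow> real) \<Rightarrow> (int \<Rightarrow> real) \<Rightarrow> (int \<Rightarrow> real \<Rightarrow> real) \<Rightarrow> (int \<Rightarrow> real) \<Rightarrow> real" where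
  "energy N p q F y =
     (\<Sum>i<N + 2. p (int i + 1) * (fdiff2 y (int i - 1))\<^sup>2) / 2
     - (\<Sum>i<N + 1. q (int i + 1) * (fdiff y (int i))\<^sup>2) / 2
     + (\<Sum>k\<in>{1..int N}. F k (y k))"

lemma energy_zero: "(\<And>k. k \<in> {1..int N} \<Longrightarrow> F k 0 = 0) \<Longrightarrow> energy N p q F (\<lambda>_. 0) = 0"
  by (simp add: energy_def fdiff2_def fdiff_def)

lemma is_solution_zero: "(\<And>k. k \<in> {1..int N} \<Longrightarrow> f k 0 = 0) \<Longrightarrow> is_solution N p q f (\<lambda>_. 0)"
  by (simp add: is_solution_def fdiff2_def fdiff_def)

lemma continuous_on_energy:
  assumes "\<And>k. k \<in> {1..int N} \<Longrightarrow> continuous_on UNIV (F k)"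
  shows "continuous_on UNIV (energy N p q F)"
proof -
  have "continuous_on UNIV (\<lambda>y :: int \<Rightarrow> real. F k (y k))" if "k \<in> {1..int N}" for k
    using continuous_on_compose2[OF assms[OF that] continuous_on_coordinate] by auto
  then show ?thesis
    unfolding energy_def[abs_def] fdiff2_def fdiff_def by (intro continuous_intros) auto
qed

lemma energy_ge:
  assumes "0 < N" and y: "in_E N y"
    and F: "\<And>k s. k \<in> {1..int N} \<Longrightarrow> a / 2 * s\<^sup>2 - C k \<le> F k s"
  shows "(a - alpha1 N p q) / 2 * sqnorm N y - (\<Sum>k\<in>{1..int N}. C k) \<le> energy N p q F y"
proof -
  have P: "eta' N p * pmin N p * sqnorm N y \<le> (\<Sum>i<N + 2. p (int i + 1) * (fdiff2 y (int i - 1))\<^sup>2)"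
    unfolding eta'_def
    by (rule sum_weighted_squares_ge[OF _ lambda2_le_sum_sq_fdiff2[OF assms(1) y] sum_sq_fdiff2_le[OF y]])
      (simp add: pmin_le)
  have Q: "(\<Sum>i<N + 1. q (int i + 1) * (fdiff y (int i))\<^sup>2) \<le> eta N q * qmax N q * sqnorm N y"
    unfolding eta_def
    by (rule sum_weighted_squares_le[OF _ lambda1_le_sum_sq_fdiff[OF assms(1) y] sum_sq_fdiff_le[OF y]])
      (simp add: qmax_ge)
  have "(\<Sum>k\<in>{1..int N}. a / 2 * (y k)\<^sup>2 - C k) \<le> (\<Sum>k\<in>{1..int N}. F k (y k))"
    by (intro sum_mono F)
  then have Fs: "a / 2 * sqnorm N y - (\<Sum>k\<in>{1..int N}. C k) \<le> (\<Sum>k\<in>{1..int N}. F k (y k))"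
    by (simp add: sqnorm_def sum_subtractf sum_distrib_left)
  have "(a - alpha1 N p q) / 2 * sqnorm N y
      = eta' N p * pmin N p * sqnorm N y / 2 - eta N q * qmax N q * sqnorm N y / 2 + a / 2 * sqnorm N y"
    by (simp add: alpha1_def field_simps)
  then show ?thesis
    unfolding energy_def using P Q Fs by linarith
qed

lemma energy_scaled_unitfun_le:
  assumes "0 < N" "0 \<le> pmax N p" and F0: "\<And>k. k \<in> {1..int N} \<Longrightarrow> F k 0 = 0"
  shows "energy N p q F (\<lambda>k. s * unitfun 0 k) \<le> F 1 s - alpha2 N p q / 2 * s\<^sup>2"
proof -
  define e where "e = (\<lambda>k. s * unitfun 0 k)"
  have e: "in_E N e"
    using assms(1) by (auto simp: in_E_def e_def unitfun_def)
  have "sqnorm N e = (\<Sum>k\<in>{1..int N}. if k = 1 then s\<^sup>2 else 0)"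
    unfolding sqnorm_def by (intro sum.cong) (auto simp: e_def unitfun_def)
  then have norm_e: "sqnorm N e = s\<^sup>2"
    using assms(1) by simp
  have "(\<Sum>i<N + 2. p (int i + 1) * (fdiff2 e (int i - 1))\<^sup>2)
      \<le> (if pmax N p < 0 then lambda2 N else 16) * pmax N p * sqnorm N e"
    by (rule sum_weighted_squares_le[OF _ lambda2_le_sum_sq_fdiff2[OF assms(1) e] sum_sq_fdiff2_le[OF e]])
      (simp add: pmax_ge)
  then have P: "(\<Sum>i<N + 2. p (int i + 1) * (fdiff2 e (int i - 1))\<^sup>2) \<le> 16 * pmax N p * s\<^sup>2"
    using assms(2) norm_e by simp
  have Q: "xi N q * qmin N q * s\<^sup>2 \<le> (\<Sum>i<N + 1. q (int i + 1) * (fdiff e (int i))\<^sup>2)"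
    unfolding xi_def norm_e[symmetric]
    by (rule sum_weighted_squares_ge[OF _ lambda1_le_sum_sq_fdiff[OF assms(1) e] sum_sq_fdiff_le[OF e]])
      (simp add: qmin_le)
  have "(\<Sum>k\<in>{1..int N}. F k (e k)) = (\<Sum>k\<in>{1..int N}. if k = 1 then F 1 s else 0)"
    by (intro sum.cong) (auto simp: e_def unitfun_def F0)
  then have Fs: "(\<Sum>k\<in>{1..int N}. F k (e k)) = F 1 s"
    using assms(1) by simp
  have "alpha2 N p q / 2 * s\<^sup>2 = xi N q * qmin N q * s\<^sup>2 / 2 - 16 * pmax N p * s\<^sup>2 / 2"
    by (simp add: alpha2_def field_simps)
  then have "energy N p q F e \<le> F 1 s - alpha2 N p q / 2 * s\<^sup>2"
    unfolding energy_def using P Q Fs by linarith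
  then show ?thesis
    by (simp add: e_def)
qed

lemma fdiff_add_scaled: "fdiff (\<lambda>k. y k + t * u k) m = fdiff y m + t * fdiff u m"
  by (simp add: fdiff_def algebra_simps)

lemma fdiff2_add_scaled: "fdiff2 (\<lambda>k. y k + t * u k) m = fdiff2 y m + t * fdiff2 u m"
  by (simp add: fdiff2_def fdiff_def algebra_simps)

lemma sum_mult_fdiff_unitfun:
  assumes "j < N"
  shows "(\<Sum>i<N + 1. g i * fdiff (unitfun j) (int i)) = g j - g (j + 1)"
proof -
  have "g i * fdiff (unitfun j) (int i) = (if i = j then g i else 0) - (if i = j + 1 then g i else 0)" for i
    by (auto simp: fdiff_def unitfun_def)
  then show ?thesis
    using assms by (simp add: sum_subtractf del: sum.lessThan_Suc)
qed

lemma sum_mult_fdiff2_unitfun: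
  assumes "j < N"
  shows "(\<Sum>i<N + 2. g i * fdiff2 (unitfun j) (int i - 1)) = g j - 2 * g (j + 1) + g (j + 2)"
proof -
  have "g i * fdiff2 (unitfun j) (int i - 1)
      = (if i = j then g i else 0) + (if i = j + 1 then - 2 * g i else 0) + (if i = j + 2 then g i else 0)"
    for i
    by (auto simp: fdiff2_def fdiff_def unitfun_def)
  then show ?thesis
    using assms by (simp add: sum.distrib del: sum.lessThan_Suc)
qed

text \<open>Summation by parts against the coordinate vector \<open>unitfun j\<close>, whose support is \<open>{j + 1}\<close>.\<close>

lemma sum_fdiff2_mult_fdiff2_unitfun:
  assumes "j < N"
  shows "(\<Sum>i<N + 2. p (int i + 1) * fdiff2 y (int i - 1) * fdiff2 (unitfun j) (int i - 1))
    = fdiff2 (\<lambda>k. p k * fdiff2 y (k - 2)) (int j + 1)"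
proof -
  have "(\<Sum>i<N + 2. p (int i + 1) * fdiff2 y (int i - 1) * fdiff2 (unitfun j) (int i - 1))
      = p (int j + 1) * fdiff2 y (int j - 1) - 2 * (p (int (j + 1) + 1) * fdiff2 y (int (j + 1) - 1))
        + p (int (j + 2) + 1) * fdiff2 y (int (j + 2) - 1)"
    by (rule sum_mult_fdiff2_unitfun[OF assms])
  then show ?thesis
    by (simp add: fdiff2_def fdiff_def algebra_simps)
qed

lemma sum_fdiff_mult_fdiff_unitfun:
  assumes "j < N"
  shows "(\<Sum>i<N + 1. q (int i + 1) * fdiff y (int i) * fdiff (unitfun j) (int i))
    = - fdiff (\<lambda>k. q k * fdiff y (k - 1)) (int j + 1)"
proof -
  have "(\<Sum>i<N + 1. q (int i + 1) * fdiff y (int i) * fdiff (unitfun j) (int i))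
      = q (int j + 1) * fdiff y (int j) - q (int (j + 1) + 1) * fdiff y (int (j + 1))"
    by (rule sum_mult_fdiff_unitfun[OF assms])
  then show ?thesis
    by (simp add: fdiff_def algebra_simps)
qed

lemma energy_has_derivative_along_unitfun:
  assumes F': "\<And>k x. k \<in> {1..int N} \<Longrightarrow> (F k has_real_derivative f k x) (at x)" and j: "j < N"
  shows "((\<lambda>t. energy N p q F (\<lambda>k. y k + t * unitfun j k)) has_real_derivative
      fdiff2 (\<lambda>k. p k * fdiff2 y (k - 2)) (int j + 1) + fdiff (\<lambda>k. q k * fdiff y (k - 1)) (int j + 1)
      + f (int j + 1) (y (int j + 1))) (at 0)"
proof -
  have dP: "((\<lambda>t. \<Sum>i<N + 2. p (int i + 1) * (fdiff2 y (int i - 1) + t * fdiff2 (unitfun j) (int i - 1))\<^sup>2)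
      has_real_derivative 2 * (\<Sum>i<N + 2. p (int i + 1) * fdiff2 y (int i - 1) * fdiff2 (unitfun j) (int i - 1)))
      (at 0)"
    unfolding sum_distrib_left by (intro DERIV_sum) (auto intro!: derivative_eq_intros)
  have dQ: "((\<lambda>t. \<Sum>i<N + 1. q (int i + 1) * (fdiff y (int i) + t * fdiff (unitfun j) (int i))\<^sup>2)
      has_real_derivative 2 * (\<Sum>i<N + 1. q (int i + 1) * fdiff y (int i) * fdiff (unitfun j) (int i))) (at 0)"
    unfolding sum_distrib_left by (intro DERIV_sum) (auto intro!: derivative_eq_intros)
  have dF: "((\<lambda>t. \<Sum>k\<in>{1..int N}. F k (y k + t * unitfun j k)) has_real_derivative
      (\<Sum>k\<in>{1..int N}. f k (y k) * unitfun j k)) (at 0)"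
  proof (intro DERIV_sum)
    fix k
    assume k: "k \<in> {1..int N}"
    have "((\<lambda>t. y k + t * unitfun j k) has_real_derivative unitfun j k) (at 0)"
      by (auto intro!: derivative_eq_intros)
    from DERIV_chain2[OF F'[OF k] this]
    show "((\<lambda>t. F k (y k + t * unitfun j k)) has_real_derivative f k (y k) * unitfun j k) (at 0)"
      by simp
  qed
  have d: "((\<lambda>t. energy N p q F (\<lambda>k. y k + t * unitfun j k)) has_real_derivative
      2 * (\<Sum>i<N + 2. p (int i + 1) * fdiff2 y (int i - 1) * fdiff2 (unitfun j) (int i - 1)) / 2
      - 2 * (\<Sum>i<N + 1. q (int i + 1) * fdiff y (int i) * fdiff (unitfun j) (int i)) / 2
      + (\<Sum>k\<in>{1..int N}. f k (y k) * unitfun j k)) (at 0)"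
    unfolding energy_def fdiff2_add_scaled fdiff_add_scaled
    by (intro DERIV_add DERIV_diff DERIV_cdivide dP dQ dF)
  have SF: "(\<Sum>k\<in>{1..int N}. f k (y k) * unitfun j k) = f (int j + 1) (y (int j + 1))"
  proof -
    have "(\<Sum>k\<in>{1..int N}. f k (y k) * unitfun j k) = (\<Sum>k\<in>{1..int N}. if k = int j + 1 then f k (y k) else 0)"
      by (intro sum.cong) (auto simp: unitfun_def)
    then show ?thesis
      using j by simp
  qed
  show ?thesis
    using d unfolding sum_fdiff2_mult_fdiff2_unitfun[OF j] sum_fdiff_mult_fdiff_unitfun[OF j] SF by simp
qed

lemma energy_minimizer_is_solution:
  assumes F': "\<And>k x. k \<in> {1..int N} \<Longrightarrow> (F k has_real_derivative f k x) (at x)"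
    and y: "in_E N y" and min: "\<And>z. in_E N z \<Longrightarrow> energy N p q F y \<le> energy N p q F z"
  shows "is_solution N p q f y"
proof -
  have "fdiff2 (\<lambda>k. p k * fdiff2 y (k - 2)) k + fdiff (\<lambda>k. q k * fdiff y (k - 1)) k + f k (y k) = 0"
    if "k \<in> {1..int N}" for k
  proof -
    define j where "j = nat (k - 1)"
    have j: "j < N" "k = int j + 1"
      using that by (auto simp: j_def)
    have "in_E N (\<lambda>i. y i + t * unitfun j i)" for t
      using y j(1) by (auto simp: in_E_def unitfun_def)
    then have local_min: "\<forall>t. \<bar>0 - t\<bar> < 1 \<longrightarrow>
        energy N p q F (\<lambda>i. y i + 0 * unitfun j i) \<le> energy N p q F (\<lambda>i. y i + t * unitfun j i)"
      using min by simp
    have "((\<lambda>t. energy N p q F (\<lambda>i. y i + t * unitfun j i)) has_real_derivative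
        fdiff2 (\<lambda>k. p k * fdiff2 y (k - 2)) k + fdiff (\<lambda>k. q k * fdiff y (k - 1)) k + f k (y k)) (at 0)"
      unfolding j(2) by (rule energy_has_derivative_along_unitfun[OF _ j(1)]) (rule F')
    from DERIV_local_min[OF this, of 1] local_min show ?thesis
      by simp
  qed
  then show ?thesis
    using y by (auto simp: is_solution_def in_E_def)
qed

lemma coercive_attains_min_on_E:
  fixes J :: "(int \<Rightarrow> real) \<Rightarrow> real"
  assumes cont: "continuous_on UNIV J" and "0 < w"
    and coercive: "\<And>y. in_E N y \<Longrightarrow> w * sqnorm N y - C \<le> J y"
  shows "\<exists>y. in_E N y \<and> (\<forall>z. in_E N z \<longrightarrow> J y \<le> J z)"
proof -
  define R where "R = (\<bar>C\<bar> + \<bar>J (\<lambda>_. 0)\<bar>) / w + 1"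
  have "1 \<le> R"
    using \<open>0 < w\<close> by (simp add: R_def)
  define B where "B = {y :: int \<Rightarrow> real. (\<forall>k. k \<notin> {1..int N} \<longrightarrow> y k = 0) \<and> (\<forall>k. \<bar>y k\<bar> \<le> R)}"
  have "compact B"
    unfolding B_def using \<open>1 \<le> R\<close> by (intro compact_supported_box) simp
  moreover have zero: "(\<lambda>_. 0) \<in> B"
    using \<open>1 \<le> R\<close> by (simp add: B_def)
  moreover have "continuous_on B J"
    using cont by (rule continuous_on_subset) simp
  ultimately obtain y where yB: "y \<in> B" and min: "\<And>z. z \<in> B \<Longrightarrow> J y \<le> J z"
    using continuous_attains_inf by (metis empty_iff)
  show ?thesis
  proof (intro exI conjI allI impI)
    show "in_E N y"
      using yB by (simp add: B_def in_E_def)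
    fix z
    assume z: "in_E N z"
    show "J y \<le> J z"
    proof (cases "z \<in> B")
      case False
      then obtain k where k: "R < \<bar>z k\<bar>"
        using z by (auto simp: B_def in_E_def not_le)
      then have "k \<in> {1..int N}"
        using z \<open>1 \<le> R\<close> by (auto simp: in_E_def)
      then have "(z k)\<^sup>2 \<le> sqnorm N z"
        unfolding sqnorm_def by (intro member_le_sum) auto
      moreover have "R * 1 \<le> \<bar>z k\<bar> * \<bar>z k\<bar>"
        using k \<open>1 \<le> R\<close> by (intro mult_mono) auto
      ultimately have "w * R \<le> w * sqnorm N z"
        using \<open>0 < w\<close> by (simp add: power2_eq_square)
      moreover have "w * R = \<bar>C\<bar> + \<bar>J (\<lambda>_. 0)\<bar> + w"
        using \<open>0 < w\<close> by (simp add: R_def field_simps)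
      ultimately have "J (\<lambda>_. 0) < J z"
        using coercive[OF z] \<open>0 < w\<close> abs_ge_self[of C] abs_ge_self[of "J (\<lambda>_. 0)"] by linarith
      then show ?thesis
        using min[OF zero] by simp
    qed (rule min)
  qed
qed

section \<open>Antiderivatives\<close>

lemma exists_antiderivative_vanishing_at_0:
  fixes g :: "real \<Rightarrow> real"
  assumes "continuous_on UNIV g"
  shows "\<exists>G. G 0 = 0 \<and> (\<forall>x. (G has_real_derivative g x) (at x))"
proof -
  have "isCont g x" for x
    using assms by (simp add: continuous_on_eq_continuous_at)
  then obtain G0 where "\<And>x. (G0 has_vector_derivative g x) (at x)"
    using einterval_antiderivative[of "-\<infinity>" "\<infinity>" g] by auto
  then have G0: "(G0 has_real_derivative g x) (at x)" for x
    by (simp add: has_real_derivative_iff_has_vector_derivative)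
  show ?thesis
    by (intro exI[of _ "\<lambda>x. G0 x - G0 0"]) (auto intro!: derivative_eq_intros G0)
qed

lemma vanishes_at_0_if_tendsto_quotient:
  fixes g :: "real \<Rightarrow> real"
  assumes "isCont g 0" and "((\<lambda>s. g s / s) \<longlongrightarrow> L) (at 0)"
  shows "g 0 = 0"
proof -
  have "((\<lambda>s. s * (g s / s)) \<longlongrightarrow> 0 * L) (at 0)"
    by (intro tendsto_mult tendsto_ident_at assms(2))
  moreover have "\<forall>\<^sub>F s in at 0. s * (g s / s) = g s"
    by (auto simp: eventually_at_filter)
  ultimately have "(g \<longlongrightarrow> 0) (at 0)"
    using tendsto_cong by force
  moreover have "(g \<longlongrightarrow> g 0) (at 0)"
    using assms(1) by (simp add: isCont_def)
  ultimately show ?thesis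
    using tendsto_unique[OF at_neq_bot] by metis
qed

text \<open>Beyond \<open>T\<close> the function \<open>G s - a s\<^sup>2/2\<close> is non-decreasing, and so is \<open>G(-s) - G s\<close>
  by the one-sided oddness of \<open>g\<close>; on \<open>[-T, T]\<close> compactness gives the bound.\<close>

lemma antiderivative_ge_quadratic:
  fixes G g :: "real \<Rightarrow> real"
  assumes G': "\<And>x. (G has_real_derivative g x) (at x)"
    and lim: "((\<lambda>s. ereal (g s / s)) \<longlongrightarrow> L) at_top" and "ereal a < L"
    and odd: "\<And>s. S \<le> s \<Longrightarrow> g (-s) \<le> - g s"
  shows "\<exists>C. \<forall>s. a / 2 * s\<^sup>2 - C \<le> G s"
proof -
  have "\<forall>\<^sub>F s in at_top. a * s \<le> g s"
    using order_tendstoD(1)[OF lim \<open>ereal a < L\<close>] eventually_gt_at_top[of 0]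
    by eventually_elim (auto simp: pos_less_divide_eq)
  then obtain T0 where T0: "\<And>s. T0 \<le> s \<Longrightarrow> a * s \<le> g s"
    by (auto simp: eventually_at_top_linorder)
  define T where "T = max (max T0 S) 0"
  define \<phi> where "\<phi> x = G x - a / 2 * x\<^sup>2" for x
  define \<psi> where "\<psi> x = G (-x) - G x" for x
  have \<phi>': "(\<phi> has_real_derivative g x - a * x) (at x)" for x
    unfolding \<phi>_def by (auto intro!: derivative_eq_intros G')
  have \<psi>': "(\<psi> has_real_derivative - g (-x) - g x) (at x)" for x
    unfolding \<psi>_def by (auto intro!: derivative_eq_intros DERIV_chain2[OF G'] G')
  have \<phi>_mono: "\<phi> T \<le> \<phi> s" if "T \<le> s" for s
  proof (rule DERIV_nonneg_imp_nondecreasing[OF that])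
    fix x
    assume "T \<le> x" "x \<le> s"
    then have "0 \<le> g x - a * x"
      using T0[of x] by (simp add: T_def)
    then show "\<exists>y. (\<phi> has_real_derivative y) (at x) \<and> 0 \<le> y"
      using \<phi>' by blast
  qed
  have \<psi>_mono: "\<psi> T \<le> \<psi> s" if "T \<le> s" for s
  proof (rule DERIV_nonneg_imp_nondecreasing[OF that])
    fix x
    assume "T \<le> x" "x \<le> s"
    then have "0 \<le> - g (-x) - g x"
      using odd[of x] by (simp add: T_def)
    then show "\<exists>y. (\<psi> has_real_derivative y) (at x) \<and> 0 \<le> y"
      using \<psi>' by blast
  qed
  have "continuous_on {-T..T} \<phi>"
    using \<phi>' by (meson DERIV_atLeastAtMost_imp_continuous_on)
  moreover have "{-T..T} \<noteq> {}"
    by (auto simp: T_def)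
  ultimately obtain m where m: "\<And>s. s \<in> {-T..T} \<Longrightarrow> \<phi> m \<le> \<phi> s"
    using continuous_attains_inf[OF compact_Icc] by metis
  show ?thesis
  proof (intro exI allI)
    fix s
    consider "s \<in> {-T..T}" | "T < s" | "s < -T"
      by force
    then show "a / 2 * s\<^sup>2 - max (- \<phi> m) (- \<phi> T - min 0 (\<psi> T)) \<le> G s"
    proof cases
      case 1
      then show ?thesis
        using m[OF 1] by (simp add: \<phi>_def)
    next
      case 2
      then show ?thesis
        using \<phi>_mono[of s] by (simp add: \<phi>_def)
    next
      case 3
      then show ?thesis
        using \<phi>_mono[of "-s"] \<psi>_mono[of "-s"] by (simp add: \<phi>_def \<psi>_def)
    qed
  qed
qed

lemma antiderivative_le_quadratic_near_0:
  fixes G g :: "real \<Rightarrow> real"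
  assumes G': "\<And>x. (G has_real_derivative g x) (at x)" and "G 0 = 0" "g 0 = 0"
    and lim: "((\<lambda>s. g s / s) \<longlongrightarrow> L) (at 0)" and "L < b"
  obtains d where "0 < d" "\<And>s. \<bar>s\<bar> < d \<Longrightarrow> G s \<le> b / 2 * s\<^sup>2"
proof -
  obtain d where "0 < d" and d: "\<And>s. s \<noteq> 0 \<Longrightarrow> \<bar>s\<bar> < d \<Longrightarrow> g s / s < b"
    using order_tendstoD(2)[OF lim \<open>L < b\<close>] by (auto simp: eventually_at dist_real_def)
  define \<phi> where "\<phi> x = G x - b / 2 * x\<^sup>2" for x
  have \<phi>': "(\<phi> has_real_derivative g x - b * x) (at x)" for x
    unfolding \<phi>_def by (auto intro!: derivative_eq_intros G')
  have "\<phi> s \<le> \<phi> 0" if s: "\<bar>s\<bar> < d" for s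
  proof (cases "0 \<le> s")
    case True
    show ?thesis
    proof (rule DERIV_nonpos_imp_nonincreasing[OF True])
      fix x
      assume "0 \<le> x" "x \<le> s"
      then have "g x - b * x \<le> 0"
        using d[of x] s \<open>g 0 = 0\<close> by (cases "x = 0") (auto simp: pos_divide_less_eq)
      then show "\<exists>y. (\<phi> has_real_derivative y) (at x) \<and> y \<le> 0"
        using \<phi>' by blast
    qed
  next
    case False
    show ?thesis
    proof (rule DERIV_nonneg_imp_nondecreasing[of s 0 \<phi>])
      show "s \<le> 0"
        using False by simp
      fix x
      assume "s \<le> x" "x \<le> 0"
      then have "0 \<le> g x - b * x"
        using d[of x] s \<open>g 0 = 0\<close> by (cases "x = 0") (auto simp: neg_divide_less_eq)
      then show "\<exists>y. (\<phi> has_real_derivative y) (at x) \<and> 0 \<le> y"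
        using \<phi>' by blast
    qed
  qed
  then show ?thesis
    using that[OF \<open>0 < d\<close>] \<open>G 0 = 0\<close> by (simp add: \<phi>_def)
qed

section \<open>A non-trivial minimiser\<close>

lemma antiderivatives_ge_quadratic:
  fixes F f :: "int \<Rightarrow> real \<Rightarrow> real" and Linf :: "int \<Rightarrow> ereal"
  assumes "finite K"
    and F': "\<And>k x. k \<in> K \<Longrightarrow> (F k has_real_derivative f k x) (at x)"
    and lim: "\<And>k. k \<in> K \<Longrightarrow> ((\<lambda>s. ereal (f k s / s)) \<longlongrightarrow> Linf k) at_top"
    and a: "ereal a < Min (Linf ` K)"
    and odd: "\<And>s k. S \<le> s \<Longrightarrow> k \<in> K \<Longrightarrow> f k (-s) \<le> - f k s"
  shows "\<exists>C. \<forall>k\<in>K. \<forall>s. a / 2 * s\<^sup>2 - C k \<le> F k s"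
proof -
  have "\<exists>C. \<forall>s. a / 2 * s\<^sup>2 - C \<le> F k s" if k: "k \<in> K" for k
  proof -
    have "Min (Linf ` K) \<le> Linf k"
      using k \<open>finite K\<close> by (intro Min_le) auto
    then have "ereal a < Linf k"
      using a by simp
    then show ?thesis
      by (rule antiderivative_ge_quadratic[OF F'[OF k] lim[OF k], where S = S]) (use odd k in blast)
  qed
  then have "\<forall>k\<in>K. \<exists>C. \<forall>s. a / 2 * s\<^sup>2 - C \<le> F k s"
    by blast
  then show ?thesis
    by (rule bchoice)
qed

lemma energy_attains_global_min:
  assumes "0 < N" and F': "\<And>k x. k \<in> {1..int N} \<Longrightarrow> (F k has_real_derivative f k x) (at x)"
    and "alpha1 N p q < a" and C: "\<forall>k\<in>{1..int N}. \<forall>s. a / 2 * s\<^sup>2 - C k \<le> F k s"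
  shows "\<exists>y. in_E N y \<and> (\<forall>z. in_E N z \<longrightarrow> energy N p q F y \<le> energy N p q F z)"
proof (rule coercive_attains_min_on_E[where w = "(a - alpha1 N p q) / 2" and C = "\<Sum>k\<in>{1..int N}. C k"])
  show "continuous_on UNIV (energy N p q F)"
    by (rule continuous_on_energy, rule DERIV_continuous_on) (rule F')
  show "0 < (a - alpha1 N p q) / 2"
    using \<open>alpha1 N p q < a\<close> by simp
  show "(a - alpha1 N p q) / 2 * sqnorm N y - (\<Sum>k\<in>{1..int N}. C k) \<le> energy N p q F y"
    if "in_E N y" for y
    by (rule energy_ge[OF \<open>0 < N\<close> that]) (use C in blast)
qed

lemma energy_negative_somewhere:
  assumes "0 < N" "0 \<le> pmax N p" and F0: "\<And>k. k \<in> {1..int N} \<Longrightarrow> F k 0 = 0"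
    and F1': "\<And>x. (F 1 has_real_derivative f 1 x) (at x)" and "f 1 0 = 0"
    and lim: "((\<lambda>s. f 1 s / s) \<longlongrightarrow> L) (at 0)" and "L < alpha2 N p q"
  shows "\<exists>e. in_E N e \<and> energy N p q F e < 0"
proof -
  obtain b where b: "L < b" "b < alpha2 N p q"
    using dense[OF \<open>L < alpha2 N p q\<close>] by blast
  have "F 1 0 = 0"
    using F0 \<open>0 < N\<close> by simp
  then obtain d where "0 < d" and d: "\<And>s. \<bar>s\<bar> < d \<Longrightarrow> F 1 s \<le> b / 2 * s\<^sup>2"
    using antiderivative_le_quadratic_near_0[OF F1' _ \<open>f 1 0 = 0\<close> lim b(1)] by blast
  define e where "e = (\<lambda>k. d / 2 * unitfun 0 k)"
  have "energy N p q F e \<le> F 1 (d / 2) - alpha2 N p q / 2 * (d / 2)\<^sup>2"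
    unfolding e_def using assms(1,2) by (intro energy_scaled_unitfun_le F0) auto
  also have "\<dots> \<le> (b - alpha2 N p q) / 2 * (d / 2)\<^sup>2"
    using d[of "d / 2"] \<open>0 < d\<close> by (simp add: field_simps)
  also have "\<dots> < 0"
    using b(2) \<open>0 < d\<close> by (intro mult_neg_pos) auto
  finally have "energy N p q F e < 0" .
  moreover have "in_E N e"
    using \<open>0 < N\<close> by (auto simp: e_def in_E_def unitfun_def)
  ultimately show ?thesis
    by blast
qed

theorem theorem5:
  fixes N :: nat and f :: "int \<Rightarrow> real \<Rightarrow> real" and p q :: "int \<Rightarrow> real"
    and Linf :: "int \<Rightarrow> ereal" and L0 :: "int \<Rightarrow> real"
  assumes "N \<ge> 1"
    and dimE: "N > 1"
    and cont: "\<forall>k\<in>{1 .. int N}. continuous_on UNIV (f k)"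
    and ppos: "pmax N p > 0"
    and lim_inf: "\<forall>k\<in>{1 .. int N}. ((\<lambda>s. ereal (f k s / s)) \<longlongrightarrow> Linf k) at_top"
    and lim_zero: "\<forall>k\<in>{1 .. int N}. ((\<lambda>s. f k s / s) \<longlongrightarrow> L0 k) (at 0)"
    and H1: "Min (Linf ` {1 .. int N}) > ereal (alpha1 N p q)"
    and H2: "\<exists>S>0. \<forall>s\<ge>S. \<forall>k\<in>{1 .. int N}. f k (- s) \<le> - f k s"
    and H3: "Max (L0 ` {1 .. int N}) < alpha2 N p q"
  shows "\<exists>y1 y2. is_solution N p q f y1 \<and> is_solution N p q f y2 \<and>
           (\<exists>k\<in>{-1 .. int N + 2}. y1 k \<noteq> y2 k)"
proof -
  let ?K = "{1 .. int N}"
  \<comment> \<open>only \<open>N \<ge> 1\<close> is needed\<close>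
  have N: "0 < N" "1 \<in> ?K"
    using \<open>N \<ge> 1\<close> by auto
  have "\<forall>k\<in>?K. \<exists>G. G 0 = 0 \<and> (\<forall>x. (G has_real_derivative f k x) (at x))"
  proof
    fix k
    assume "k \<in> ?K"
    with cont show "\<exists>G. G 0 = 0 \<and> (\<forall>x. (G has_real_derivative f k x) (at x))"
      by (intro exists_antiderivative_vanishing_at_0) blast
  qed
  from bchoice[OF this] obtain F
    where F: "\<forall>k\<in>?K. F k 0 = 0 \<and> (\<forall>x. (F k has_real_derivative f k x) (at x))"
    by blast
  have f0: "f k 0 = 0" if "k \<in> ?K" for k
  proof (rule vanishes_at_0_if_tendsto_quotient)
    show "isCont (f k) 0"
      using cont that by (simp add: continuous_on_eq_continuous_at)
    show "((\<lambda>s. f k s / s) \<longlongrightarrow> L0 k) (at 0)"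
      using lim_zero that by blast
  qed
  obtain S where S: "\<And>s k. S \<le> s \<Longrightarrow> k \<in> ?K \<Longrightarrow> f k (- s) \<le> - f k s"
    using H2 by blast
  obtain a where a: "alpha1 N p q < a" "ereal a < Min (Linf ` ?K)"
    using ereal_dense2[OF H1] by auto
  have "\<exists>C. \<forall>k\<in>?K. \<forall>s. a / 2 * s\<^sup>2 - C k \<le> F k s"
    by (rule antiderivatives_ge_quadratic[where Linf = Linf and S = S]) (use F lim_inf a(2) S in auto)
  then obtain C where "\<forall>k\<in>?K. \<forall>s. a / 2 * s\<^sup>2 - C k \<le> F k s"
    by blast
  then have "\<exists>y. in_E N y \<and> (\<forall>z. in_E N z \<longrightarrow> energy N p q F y \<le> energy N p q F z)"
    by (intro energy_attains_global_min[where a = a]) (use N F a(1) in auto)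
  then obtain y where y: "in_E N y" and min: "\<And>z. in_E N z \<Longrightarrow> energy N p q F y \<le> energy N p q F z"
    by blast
  have "L0 1 \<le> Max (L0 ` ?K)"
    using N(2) by (intro Max_ge) auto
  then have "\<exists>e. in_E N e \<and> energy N p q F e < 0"
    using H3 by (intro energy_negative_somewhere[where f = f and L = "L0 1"]) (use N ppos F f0 lim_zero in auto)
  then have "energy N p q F y < 0"
    using min by (meson le_less_trans)
  then have "y \<noteq> (\<lambda>_. 0)"
    using energy_zero[of N F p q] F by auto
  then obtain k where "y k \<noteq> 0"
    by auto
  then have "k \<in> ?K"
    using y unfolding in_E_def by blast
  then have "k \<in> {-1 .. int N + 2}"
    by auto
  moreover have "is_solution N p q f y"
    by (rule energy_minimizer_is_solution[OF _ y]) (use F min in auto)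
  ultimately show ?thesis
    using \<open>y k \<noteq> 0\<close> is_solution_zero[of N f p q] f0 by blast
qed

end
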